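(* Let $G=(V,E)$ be a naturally ordered DAG. The saturation ideal $I_G:S_G\subseteq\mathbb R[\Sigma]$ is prime.
   Context: $\mathbb R[\Sigma]$ is the polynomial ring in symmetric variables $\sigma_{ij}=\sigma_{ji}$, $i,j\in V=[p]$; $ij\in E\Rightarrow i<j$. $I_G$ is the ideal generated by $|\Sigma_{ij|\mathrm{pa}(j)}|$ for $i<j$ with $ij\notin E$, where $\Sigma_{ij|K}$ has rows $(i,K)$ and columns $(j,K)$. $S_G=\{\prod_{i\in V}|\Sigma_{\mathrm{pa}(i)}|^{k_i}:k_i\in\mathbb N\}$ and $I:S=\{f:fs\in I\text{ for some }s\in S\}$. *)

theory Defs
  imports "HOL-Library.Poly_Mapping" "Jordan_Normal_Form.Determinant"
begin

text \<open>Polynomials with real coefficients in variables indexed by pairs of naturals: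
  a polynomial is a finitely supported map from monomials (finitely supported exponent
  vectors) to coefficients.\<close>
type_synonym rpoly = "((nat \<times> nat) \<Rightarrow>\<^sub>0 nat) \<Rightarrow>\<^sub>0 real"

text \<open>The symmetric variable sigma_ij = sigma_ji, represented by the variable (min i j, max i j).\<close>
definition sigma :: "nat \<Rightarrow> nat \<Rightarrow> rpoly" where
  "sigma i j = Poly_Mapping.single (Poly_Mapping.single (min i j, max i j) 1) 1"

definition RSigma :: "nat \<Rightarrow> rpoly set" where
  "RSigma p = {f. \<forall>m \<in> Poly_Mapping.keys f.
      Poly_Mapping.keys m \<subseteq> {(i, j). 1 \<le> i \<and> i \<le> j \<and> j \<le> p}}"

definition subdet :: "nat list \<Rightarrow> nat list \<Rightarrow> rpoly" where
  "subdet rs cs = det (mat (length rs) (length cs) (\<lambda>(r, c). sigma (rs ! r) (cs ! c)))"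

definition pa :: "(nat \<times> nat) set \<Rightarrow> nat \<Rightarrow> nat set" where
  "pa E j = {i. (i, j) \<in> E}"

definition cond_det :: "nat \<Rightarrow> nat \<Rightarrow> nat set \<Rightarrow> rpoly" where
  "cond_det i j K = subdet (i # sorted_list_of_set K) (j # sorted_list_of_set K)"

text \<open>|Sigma_K| (principal minor; equals 1 for K empty).\<close>
definition princ_det :: "nat set \<Rightarrow> rpoly" where
  "princ_det K = subdet (sorted_list_of_set K) (sorted_list_of_set K)"

definition nat_ordered_dag :: "nat \<Rightarrow> (nat \<times> nat) set \<Rightarrow> bool" where
  "nat_ordered_dag p E \<longleftrightarrow> E \<subseteq> {(i, j). 1 \<le> i \<and> i < j \<and> j \<le> p}"

definition is_ideal :: "'a::comm_ring_1 set \<Rightarrow> 'a set \<Rightarrow> bool" where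
  "is_ideal R I \<longleftrightarrow> I \<subseteq> R \<and> 0 \<in> I \<and> (\<forall>x\<in>I. \<forall>y\<in>I. x + y \<in> I)
      \<and> (\<forall>r\<in>R. \<forall>x\<in>I. r * x \<in> I)"

definition ideal_gen :: "'a::comm_ring_1 set \<Rightarrow> 'a set \<Rightarrow> 'a set" where
  "ideal_gen R X = \<Inter> {I. is_ideal R I \<and> X \<subseteq> I}"

definition is_prime_ideal :: "'a::comm_ring_1 set \<Rightarrow> 'a set \<Rightarrow> bool" where
  "is_prime_ideal R I \<longleftrightarrow> is_ideal R I \<and> I \<noteq> R
      \<and> (\<forall>a\<in>R. \<forall>b\<in>R. a * b \<in> I \<longrightarrow> a \<in> I \<or> b \<in> I)"

definition saturation :: "'a::comm_ring_1 set \<Rightarrow> 'a set \<Rightarrow> 'a set \<Rightarrow> 'a set" where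
  "saturation R I S = {f \<in> R. \<exists>s\<in>S. f * s \<in> I}"

definition I_G :: "nat \<Rightarrow> (nat \<times> nat) set \<Rightarrow> rpoly set" where
  "I_G p E = ideal_gen (RSigma p)
     {cond_det i j (pa E j) | i j. 1 \<le> i \<and> i < j \<and> j \<le> p \<and> (i, j) \<notin> E}"

definition S_G :: "nat \<Rightarrow> (nat \<times> nat) set \<Rightarrow> rpoly set" where
  "S_G p E = {\<Prod>i\<in>{1..p}. princ_det (pa E i) ^ k i | k :: nat \<Rightarrow> nat. True}"

end

theory Submission
  imports Defs
begin

text \<open>Write \<open>\<Sigma>(\<Lambda>, \<Omega>) = (I - \<Lambda>)\<^sup>-\<^sup>T \<Omega> (I - \<Lambda>)\<^sup>-\<^sup>1\<close> for the covariance matrix of the linear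
  structural equation model on \<open>G\<close>, and let \<open>P\<close> be the ideal of polynomials vanishing on all
  \<open>\<Sigma>(\<Lambda>, \<Omega>)\<close>. Polynomial functions on a real vector space have no zero divisors, so \<open>P\<close> is prime.
  Every \<open>|\<Sigma>\<^bsub>ij|pa(j)\<^esub>|\<close> vanishes on the model, and every element of \<open>S\<^sub>G\<close> is \<open>1\<close> at
  \<open>\<Lambda> = 0, \<Omega> = I\<close>; hence \<open>I\<^sub>G : S\<^sub>G \<subseteq> P\<close>.

  Conversely, for a non-edge \<open>i < j\<close> the generator \<open>|\<Sigma>\<^bsub>ij|pa(j)\<^esub>|\<close> is
  \<open>|\<Sigma>\<^bsub>pa(j)\<^esub>| \<sigma>\<^sub>i\<^sub>j - h\<close>, where \<open>h\<close> only involves variables that come earlier in the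
  column-by-column order. Pseudo-division by these generators, in decreasing order, turns any
  \<open>f \<in> P\<close>, after multiplication by an element of \<open>S\<^sub>G\<close>, into a polynomial in the free variables
  \<open>\<sigma>\<^sub>j\<^sub>j\<close> and \<open>\<sigma>\<^sub>i\<^sub>j\<close>, \<open>ij \<in> E\<close>, modulo \<open>I\<^sub>G\<close>. The free variables are algebraically independent on
  the model: wherever \<open>|\<Sigma>\<^bsub>pa(j)\<^esub>| \<noteq> 0\<close>, the parameters of column \<open>j\<close> can be chosen to give
  the free entries of column \<open>j\<close> arbitrary values without changing the earlier columns. So the
  remainder is \<open>0\<close> and \<open>f \<in> I\<^sub>G : S\<^sub>G\<close>.\<close>

section \<open>Multivariate polynomials\<close>

definition polys_in :: "'v set \<Rightarrow> (('v \<Rightarrow>\<^sub>0 nat) \<Rightarrow>\<^sub>0 'a::zero) set" where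
  "polys_in V = {f. \<forall>m \<in> Poly_Mapping.keys f. Poly_Mapping.keys m \<subseteq> V}"

definition var :: "'v \<Rightarrow> ('v \<Rightarrow>\<^sub>0 nat) \<Rightarrow>\<^sub>0 'a::{zero,one}" where
  "var v = Poly_Mapping.single (Poly_Mapping.single v 1) 1"

definition eval_monom :: "('v \<Rightarrow> 'a::comm_semiring_1) \<Rightarrow> ('v \<Rightarrow>\<^sub>0 nat) \<Rightarrow> 'a" where
  "eval_monom x m = (\<Prod>v\<in>Poly_Mapping.keys m. x v ^ Poly_Mapping.lookup m v)"

definition insertion :: "('v \<Rightarrow> 'a::comm_semiring_1) \<Rightarrow> (('v \<Rightarrow>\<^sub>0 nat) \<Rightarrow>\<^sub>0 'a) \<Rightarrow> 'a" where
  "insertion x f = (\<Sum>m\<in>Poly_Mapping.keys f. Poly_Mapping.lookup f m * eval_monom x m)"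

lemma eval_monom_superset:
  "finite U \<Longrightarrow> Poly_Mapping.keys m \<subseteq> U \<Longrightarrow>
    eval_monom x m = (\<Prod>v\<in>U. x v ^ Poly_Mapping.lookup m v)"
  unfolding eval_monom_def by (rule prod.mono_neutral_left) (auto simp: in_keys_iff)

lemma eval_monom_add: "eval_monom x (a + b) = eval_monom x a * eval_monom x b"
proof -
  let ?U = "Poly_Mapping.keys a \<union> Poly_Mapping.keys b"
  have fin: "finite ?U" by simp
  have "eval_monom x (a + b) = (\<Prod>v\<in>?U. x v ^ Poly_Mapping.lookup (a + b) v)"
    by (rule eval_monom_superset[OF fin]) (rule keys_add)
  also have "\<dots> = (\<Prod>v\<in>?U. x v ^ Poly_Mapping.lookup a v) * (\<Prod>v\<in>?U. x v ^ Poly_Mapping.lookup b v)"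
    by (simp add: lookup_add power_add prod.distrib)
  also have "\<dots> = eval_monom x a * eval_monom x b"
    by (simp add: eval_monom_superset[OF fin])
  finally show ?thesis .
qed

lemma eval_monom_zero [simp]: "eval_monom x 0 = 1"
  by (simp add: eval_monom_def)

lemma insertion_superset:
  "finite U \<Longrightarrow> Poly_Mapping.keys f \<subseteq> U \<Longrightarrow>
    insertion x f = (\<Sum>m\<in>U. Poly_Mapping.lookup f m * eval_monom x m)"
  unfolding insertion_def by (rule sum.mono_neutral_left) (auto simp: in_keys_iff)

lemma insertion_add: "insertion x (f + g) = insertion x f + insertion x g"
proof -
  let ?U = "Poly_Mapping.keys f \<union> Poly_Mapping.keys g"
  have fin: "finite ?U" by simp
  have "insertion x (f + g) = (\<Sum>m\<in>?U. Poly_Mapping.lookup (f + g) m * eval_monom x m)"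
    by (rule insertion_superset[OF fin]) (rule keys_add)
  also have "\<dots> = insertion x f + insertion x g"
    by (simp add: lookup_add distrib_right sum.distrib insertion_superset[OF fin])
  finally show ?thesis .
qed

lemma insertion_single: "insertion x (Poly_Mapping.single m c) = c * eval_monom x m"
  by (cases "c = 0") (auto simp: insertion_def)

lemma insertion_zero [simp]: "insertion x 0 = 0"
  by (simp add: insertion_def)

lemma insertion_sum: "insertion x (sum F A) = (\<Sum>a\<in>A. insertion x (F a))"
  by (induct A rule: infinite_finite_induct) (auto simp: insertion_add)

lemma poly_mapping_sum_single:
  "f = (\<Sum>m\<in>Poly_Mapping.keys f. Poly_Mapping.single m (Poly_Mapping.lookup f m))"
  by (rule poly_mapping_eqI)
    (simp add: lookup_sum lookup_single when_def in_keys_iff sum.delta')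

lemma insertion_mult: "insertion x (f * g) = insertion x f * insertion x g"
proof -
  have "f * g = (\<Sum>a\<in>Poly_Mapping.keys f. \<Sum>b\<in>Poly_Mapping.keys g.
      Poly_Mapping.single a (Poly_Mapping.lookup f a) * Poly_Mapping.single b (Poly_Mapping.lookup g b))"
    unfolding sum_product[symmetric] by (simp only: poly_mapping_sum_single[symmetric])
  then have "insertion x (f * g) = (\<Sum>a\<in>Poly_Mapping.keys f. \<Sum>b\<in>Poly_Mapping.keys g.
      (Poly_Mapping.lookup f a * eval_monom x a) * (Poly_Mapping.lookup g b * eval_monom x b))"
    by (simp add: insertion_sum mult_single insertion_single eval_monom_add mult_ac)
  also have "\<dots> = insertion x f * insertion x g"
    by (simp add: insertion_def sum_product)
  finally show ?thesis .
qed

lemma insertion_one [simp]: "insertion x 1 = 1"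
  by (metis insertion_single eval_monom_zero mult_1 single_one)

interpretation insertion_hom: comm_ring_hom "insertion x"
  by unfold_locales (auto simp: insertion_add insertion_mult)

lemma insertion_var [simp]: "insertion x (var v) = x v"
  by (simp add: var_def insertion_single eval_monom_def)

lemma insertion_cong:
  assumes "f \<in> polys_in V" "\<And>v. v \<in> V \<Longrightarrow> x v = y v"
  shows "insertion x f = insertion y f"
  unfolding insertion_def
proof (intro sum.cong refl arg_cong2[where f = "(*)"])
  fix m assume "m \<in> Poly_Mapping.keys f"
  then have "Poly_Mapping.keys m \<subseteq> V" using assms(1) by (auto simp: polys_in_def)
  then show "eval_monom x m = eval_monom y m"
    unfolding eval_monom_def using assms(2) by (intro prod.cong) auto
qed

lemma polys_in_mono: "V \<subseteq> W \<Longrightarrow> f \<in> polys_in V \<Longrightarrow> f \<in> polys_in W"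
  unfolding polys_in_def by blast

lemma polys_in_single: "Poly_Mapping.keys m \<subseteq> V \<Longrightarrow> Poly_Mapping.single m c \<in> polys_in V"
  by (simp add: polys_in_def)

lemma polys_in_zero [simp]: "0 \<in> polys_in V"
  by (simp add: polys_in_def)

lemma polys_in_one [simp]: "(1 :: ('v \<Rightarrow>\<^sub>0 nat) \<Rightarrow>\<^sub>0 'a::semiring_1) \<in> polys_in V"
  unfolding single_one[symmetric] by (rule polys_in_single) simp

lemma polys_in_var: "v \<in> V \<Longrightarrow> var v \<in> polys_in V"
  unfolding var_def by (rule polys_in_single) simp

lemma polys_in_add: "f \<in> polys_in V \<Longrightarrow> g \<in> polys_in V \<Longrightarrow> f + g \<in> polys_in V"
  unfolding polys_in_def using keys_add[of f g] by auto

lemma polys_in_uminus: "(f :: ('v \<Rightarrow>\<^sub>0 nat) \<Rightarrow>\<^sub>0 'a::ab_group_add) \<in> polys_in V \<Longrightarrow> - f \<in> polys_in V"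
  by (simp add: polys_in_def)

lemma polys_in_diff: "(f :: ('v \<Rightarrow>\<^sub>0 nat) \<Rightarrow>\<^sub>0 'a::ab_group_add) \<in> polys_in V \<Longrightarrow> g \<in> polys_in V \<Longrightarrow> f - g \<in> polys_in V"
  unfolding polys_in_def using keys_diff[of f g] by auto

lemma polys_in_mult:
  assumes f: "f \<in> polys_in V" and g: "g \<in> polys_in V"
  shows "f * g \<in> polys_in V"
proof (unfold polys_in_def, intro CollectI ballI)
  fix m assume "m \<in> Poly_Mapping.keys (f * g)"
  then obtain a b where "m = a + b" "a \<in> Poly_Mapping.keys f" "b \<in> Poly_Mapping.keys g"
    using keys_mult by blast
  moreover have "Poly_Mapping.keys (a + b) \<subseteq> Poly_Mapping.keys a \<union> Poly_Mapping.keys b"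
    by (rule keys_add)
  moreover have "Poly_Mapping.keys a \<subseteq> V" "Poly_Mapping.keys b \<subseteq> V"
    using f g \<open>a \<in> _\<close> \<open>b \<in> _\<close> by (auto simp: polys_in_def)
  ultimately show "Poly_Mapping.keys m \<subseteq> V" by blast
qed

lemma polys_in_power: "f \<in> polys_in V \<Longrightarrow> f ^ n \<in> polys_in V"
  by (induct n) (auto intro: polys_in_mult)

lemma polys_in_sum: "(\<And>a. a \<in> A \<Longrightarrow> F a \<in> polys_in V) \<Longrightarrow> sum F A \<in> polys_in V"
  by (induct A rule: infinite_finite_induct) (auto intro: polys_in_add)

lemma polys_in_prod: "(\<And>a. a \<in> A \<Longrightarrow> F a \<in> polys_in V) \<Longrightarrow> prod F A \<in> polys_in V"
  by (induct A rule: infinite_finite_induct) (auto intro: polys_in_mult)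

lemma polys_in_of_int: "(of_int k :: ('v \<Rightarrow>\<^sub>0 nat) \<Rightarrow>\<^sub>0 'a::comm_ring_1) \<in> polys_in V"
  using polys_in_single[of 0 V "of_int k"] by simp

lemma polys_in_det:
  assumes "M \<in> carrier_mat n n" "\<And>i j. i < n \<Longrightarrow> j < n \<Longrightarrow> M $$ (i, j) \<in> polys_in V"
  shows "det M \<in> polys_in V"
  unfolding det_def'[OF assms(1)]
proof (rule polys_in_sum)
  fix \<pi> assume "\<pi> \<in> {\<pi>. \<pi> permutes {0..<n}}"
  then have "\<And>i. i < n \<Longrightarrow> \<pi> i < n" by (simp add: permutes_in_image)
  then show "signof \<pi> * (\<Prod>i = 0..<n. M $$ (i, \<pi> i)) \<in> polys_in V"
    by (intro polys_in_mult polys_in_of_int polys_in_prod) (auto intro: assms(2))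
qed

lemma polys_in_empty_eq_0:
  assumes "f \<in> polys_in {}" "insertion x f = 0"
  shows "f = 0"
proof (rule ccontr)
  assume "f \<noteq> 0"
  have "Poly_Mapping.keys f \<subseteq> {0}" using assms(1) by (auto simp: polys_in_def)
  with \<open>f \<noteq> 0\<close> have "Poly_Mapping.keys f = {0}" by (metis keys_eq_empty subset_singletonD)
  then have "insertion x f = Poly_Mapping.lookup f 0" by (simp add: insertion_def)
  moreover have "Poly_Mapping.lookup f 0 \<noteq> 0"
    using \<open>Poly_Mapping.keys f = {0}\<close> by (simp add: in_keys_iff[symmetric])
  ultimately show False using assms(2) by simp
qed

lemma var_power: "var v ^ e = Poly_Mapping.single (Poly_Mapping.single v e) 1"
  by (induct e) (simp_all add: var_def mult_single single_add[symmetric] add.commute)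

lemma single_split_var:
  assumes "Poly_Mapping.lookup m x = k"
  shows "Poly_Mapping.single m c = Poly_Mapping.single (m - Poly_Mapping.single x k) c * var x ^ k"
    and "Poly_Mapping.keys (m - Poly_Mapping.single x k) \<subseteq> Poly_Mapping.keys m - {x}"
proof -
  have "m - Poly_Mapping.single x k + Poly_Mapping.single x k = m"
    by (rule poly_mapping_eqI) (auto simp: assms[symmetric] lookup_add lookup_minus lookup_single when_def)
  then show "Poly_Mapping.single m c = Poly_Mapping.single (m - Poly_Mapping.single x k) c * var x ^ k"
    by (simp add: var_power mult_single)
  show "Poly_Mapping.keys (m - Poly_Mapping.single x k) \<subseteq> Poly_Mapping.keys m - {x}"
    by (auto simp: assms in_keys_iff lookup_minus lookup_single when_def split: if_splits)
qed

lemma poly_expansion_in_var: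
  assumes f: "f \<in> polys_in (insert x V)"
  obtains N a where "\<And>k. a k \<in> polys_in V" "\<And>k. N < k \<Longrightarrow> a k = 0"
    and "f = (\<Sum>k\<le>N. a k * var x ^ k)"
proof
  let ?e = "\<lambda>m. Poly_Mapping.lookup m x"
  define N where "N = Max (insert 0 (?e ` Poly_Mapping.keys f))"
  define a where "a k = (\<Sum>m | m \<in> Poly_Mapping.keys f \<and> ?e m = k.
      Poly_Mapping.single (m - Poly_Mapping.single x k) (Poly_Mapping.lookup f m))" for k
  have f_keys: "Poly_Mapping.keys m \<subseteq> insert x V" if "m \<in> Poly_Mapping.keys f" for m
    using f that by (auto simp: polys_in_def)
  have exp_le: "?e m \<le> N" if "m \<in> Poly_Mapping.keys f" for m
    unfolding N_def using that by (intro Max_ge) auto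
  show "a k \<in> polys_in V" for k
    unfolding a_def
  proof (intro polys_in_sum polys_in_single)
    fix m assume "m \<in> {m. m \<in> Poly_Mapping.keys f \<and> ?e m = k}"
    then show "Poly_Mapping.keys (m - Poly_Mapping.single x k) \<subseteq> V"
      using single_split_var(2)[of m x k] f_keys by blast
  qed
  show "a k = 0" if "N < k" for k
    unfolding a_def using exp_le that by (intro sum.neutral) fastforce
  have "f = (\<Sum>m\<in>Poly_Mapping.keys f. Poly_Mapping.single m (Poly_Mapping.lookup f m))"
    by (rule poly_mapping_sum_single)
  also have "\<dots> = (\<Sum>k\<le>N. \<Sum>m | m \<in> Poly_Mapping.keys f \<and> ?e m = k.
      Poly_Mapping.single m (Poly_Mapping.lookup f m))"
    by (rule sum.group[symmetric]) (use exp_le in auto)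
  also have "\<dots> = (\<Sum>k\<le>N. a k * var x ^ k)"
    unfolding a_def sum_distrib_right by (intro sum.cong refl single_split_var(1)) simp
  finally show "f = (\<Sum>k\<le>N. a k * var x ^ k)" .
qed

text \<open>Division by a polynomial \<open>c \<cdot> x - h\<close> that is linear in \<open>x\<close>, after clearing the leading
  coefficient \<open>c\<close>: substitute \<open>c x = (c x - h) + h\<close> in \<open>c\<^sup>N f\<close>.\<close>

lemma pseudo_divide_linear:
  fixes f :: "('v \<Rightarrow>\<^sub>0 nat) \<Rightarrow>\<^sub>0 'a::comm_ring_1"
  assumes f: "f \<in> polys_in (insert x V)" and c: "c \<in> polys_in V" and h: "h \<in> polys_in V"
  obtains d Q r where "c ^ d * f = Q * (c * var x - h) + r"
    and "Q \<in> polys_in (insert x V)" and "r \<in> polys_in V"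
proof -
  obtain N a where a: "\<And>k. a k \<in> polys_in V" "f = (\<Sum>k\<le>N. a k * var x ^ k)"
    using poly_expansion_in_var[OF f] by metis
  define g where "g = c * var x - h"
  define G where "G k = (\<Sum>i<k. h ^ (k - Suc i) * (c * var x) ^ i)" for k
  have coeff_step: "c ^ N * (a k * var x ^ k) = (a k * c ^ (N - k) * G k) * g + a k * c ^ (N - k) * h ^ k"
    if "k \<le> N" for k
  proof -
    have "c ^ N = c ^ (N - k) * c ^ k" using that by (simp add: power_add[symmetric])
    then have "c ^ N * (a k * var x ^ k) = a k * c ^ (N - k) * (c * var x) ^ k"
      by (simp add: power_mult_distrib mult_ac)
    also have "(c * var x) ^ k = g * G k + h ^ k"
      using power_diff_sumr2[of "c * var x" k h] unfolding g_def G_def by (simp add: algebra_simps)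
    finally show ?thesis by (simp add: algebra_simps)
  qed
  have "c ^ N * f = (\<Sum>k\<le>N. a k * c ^ (N - k) * G k) * g + (\<Sum>k\<le>N. a k * c ^ (N - k) * h ^ k)"
    unfolding a(2) sum_distrib_left sum_distrib_right sum.distrib[symmetric]
    by (rule sum.cong) (simp_all add: coeff_step)
  moreover have "(\<Sum>k\<le>N. a k * c ^ (N - k) * G k) \<in> polys_in (insert x V)"
    unfolding G_def
    by (intro polys_in_sum polys_in_mult polys_in_power polys_in_var
        polys_in_mono[of V "insert x V"] a(1) c h) auto
  moreover have "(\<Sum>k\<le>N. a k * c ^ (N - k) * h ^ k) \<in> polys_in V"
    by (intro polys_in_sum polys_in_mult polys_in_power a(1) c h)
  ultimately show ?thesis using that unfolding g_def by blast
qed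

lemma insertion_coeffs_eq_0:
  fixes a :: "nat \<Rightarrow> ('v \<Rightarrow>\<^sub>0 nat) \<Rightarrow>\<^sub>0 real"
  assumes a: "\<And>k. a k \<in> polys_in V" and "b \<notin> V"
    and vanish: "\<And>t. insertion (x(b := t)) (\<Sum>k\<le>N. a k * var b ^ k) = 0"
    and "k \<le> N"
  shows "insertion x (a k) = 0"
proof -
  have "insertion (x(b := t)) (a k) = insertion x (a k)" for t k
    by (rule insertion_cong[OF a]) (use \<open>b \<notin> V\<close> in auto)
  then have "insertion (x(b := t)) (\<Sum>k\<le>N. a k * var b ^ k) = (\<Sum>k\<le>N. insertion x (a k) * t ^ k)"
    for t by (simp add: insertion_sum insertion_mult insertion_hom.hom_power)
  then have "\<forall>t. (\<Sum>k\<le>N. insertion x (a k) * t ^ k) = 0"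
    using vanish by simp
  then have "\<forall>k\<le>N. insertion x (a k) = 0" by (simp only: polyfun_eq_0)
  then show ?thesis using \<open>k \<le> N\<close> by simp
qed

lemma insertion_subdet:
  "insertion x (subdet rs cs) =
    det (mat (length rs) (length cs) (\<lambda>(r, c). insertion x (sigma (rs ! r) (cs ! c))))"
proof -
  have "insertion x (subdet rs cs) =
      det (map_mat (insertion x) (mat (length rs) (length cs) (\<lambda>(r, c). sigma (rs ! r) (cs ! c))))"
    unfolding subdet_def by (rule insertion_hom.hom_det[symmetric])
  also have "map_mat (insertion x) (mat (length rs) (length cs) (\<lambda>(r, c). sigma (rs ! r) (cs ! c)))
      = mat (length rs) (length cs) (\<lambda>(r, c). insertion x (sigma (rs ! r) (cs ! c)))"
    by (rule eq_matI) auto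
  finally show ?thesis .
qed

lemma sigma_eq_var: "sigma a b = var (min a b, max a b)"
  by (simp add: sigma_def var_def)

section \<open>Polynomial functions\<close>

inductive_set poly_fun :: "(('v \<Rightarrow> real) \<Rightarrow> real) set" where
  poly_fun_const: "(\<lambda>\<theta>. c) \<in> poly_fun"
| poly_fun_coord: "(\<lambda>\<theta>. \<theta> v) \<in> poly_fun"
| poly_fun_add: "f \<in> poly_fun \<Longrightarrow> g \<in> poly_fun \<Longrightarrow> (\<lambda>\<theta>. f \<theta> + g \<theta>) \<in> poly_fun"
| poly_fun_mult: "f \<in> poly_fun \<Longrightarrow> g \<in> poly_fun \<Longrightarrow> (\<lambda>\<theta>. f \<theta> * g \<theta>) \<in> poly_fun"

lemma poly_fun_sum: "(\<And>a. a \<in> A \<Longrightarrow> F a \<in> poly_fun) \<Longrightarrow> (\<lambda>\<theta>. \<Sum>a\<in>A. F a \<theta>) \<in> poly_fun"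
proof (induct A rule: infinite_finite_induct)
  case (insert x F)
  then show ?case by (simp add: poly_fun_add)
qed (simp_all add: poly_fun_const[of 0])

lemma poly_fun_prod: "(\<And>a. a \<in> A \<Longrightarrow> F a \<in> poly_fun) \<Longrightarrow> (\<lambda>\<theta>. \<Prod>a\<in>A. F a \<theta>) \<in> poly_fun"
proof (induct A rule: infinite_finite_induct)
  case (insert x F)
  then show ?case by (simp add: poly_fun_mult)
qed (simp_all add: poly_fun_const[of 1])

lemma poly_fun_power: "f \<in> poly_fun \<Longrightarrow> (\<lambda>\<theta>. f \<theta> ^ n) \<in> poly_fun"
proof (induct n)
  case 0
  then show ?case using poly_fun_const[of 1] by simp
next
  case (Suc n)
  then show ?case using poly_fun_mult[OF Suc(2) Suc(1)[OF Suc(2)]] by simp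
qed

lemma poly_fun_insertion:
  assumes "\<And>w. (\<lambda>\<theta>. X \<theta> w) \<in> poly_fun"
  shows "(\<lambda>\<theta>. insertion (X \<theta>) f) \<in> poly_fun"
  unfolding insertion_def eval_monom_def
proof (rule poly_fun_sum)
  fix m
  have "(\<lambda>\<theta>. \<Prod>v\<in>Poly_Mapping.keys m. X \<theta> v ^ Poly_Mapping.lookup m v) \<in> poly_fun"
    by (rule poly_fun_prod) (rule poly_fun_power[OF assms])
  then show "(\<lambda>\<theta>. Poly_Mapping.lookup f m * (\<Prod>v\<in>Poly_Mapping.keys m. X \<theta> v ^ Poly_Mapping.lookup m v)) \<in> poly_fun"
    by (rule poly_fun_mult[OF poly_fun_const])
qed

lemma poly_fun_on_line: "f \<in> poly_fun \<Longrightarrow> \<exists>q. \<forall>t. f (\<lambda>v. a v + t * b v) = poly q t"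
proof (induct rule: poly_fun.induct)
  case (poly_fun_const c)
  show ?case by (intro exI[of _ "[:c:]"]) simp
next
  case (poly_fun_coord v)
  show ?case by (intro exI[of _ "[:a v, b v:]"]) simp
next
  case (poly_fun_add f g)
  then obtain q1 q2 where "\<forall>t. f (\<lambda>v. a v + t * b v) = poly q1 t" "\<forall>t. g (\<lambda>v. a v + t * b v) = poly q2 t"
    by blast
  then show ?case by (intro exI[of _ "q1 + q2"]) simp
next
  case (poly_fun_mult f g)
  then obtain q1 q2 where "\<forall>t. f (\<lambda>v. a v + t * b v) = poly q1 t" "\<forall>t. g (\<lambda>v. a v + t * b v) = poly q2 t"
    by blast
  then show ?case by (intro exI[of _ "q1 * q2"]) simp
qed

text \<open>Restrict to the line through a non-zero of \<open>f\<close> and a non-zero of \<open>g\<close>.\<close>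

lemma poly_fun_mult_eq_0D:
  assumes f: "f \<in> poly_fun" and g: "g \<in> poly_fun" and fg: "\<And>\<theta>. f \<theta> * g \<theta> = 0"
  shows "(\<forall>\<theta>. f \<theta> = 0) \<or> (\<forall>\<theta>. g \<theta> = 0)"
proof (rule ccontr)
  assume "\<not> ?thesis"
  then obtain a b where fa: "f a \<noteq> 0" and gb: "g b \<noteq> 0" by auto
  define d where "d v = b v - a v" for v
  obtain q1 where q1: "\<forall>t. f (\<lambda>v. a v + t * d v) = poly q1 t" using poly_fun_on_line[OF f] by blast
  obtain q2 where q2: "\<forall>t. g (\<lambda>v. a v + t * d v) = poly q2 t" using poly_fun_on_line[OF g] by blast
  have "poly q1 0 \<noteq> 0"
    using q1 fa by (metis (no_types, lifting) add.right_neutral ext mult_zero_left)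
  moreover have "(\<lambda>v. a v + 1 * d v) = b" by (simp add: d_def)
  then have "poly q2 1 \<noteq> 0" using q2 gb by metis
  ultimately have "q1 * q2 \<noteq> 0" by auto
  moreover have "\<forall>t. poly (q1 * q2) t = 0" using q1 q2 fg by (metis poly_mult)
  ultimately show False using poly_all_0_iff_0 by blast
qed

section \<open>Ideals\<close>

lemma ideal_gen_least: "is_ideal R I \<Longrightarrow> X \<subseteq> I \<Longrightarrow> ideal_gen R X \<subseteq> I"
  unfolding ideal_gen_def by blast

lemma ideal_gen_superset: "X \<subseteq> ideal_gen R X"
  unfolding ideal_gen_def by blast

lemma is_ideal_Inter:
  assumes "J \<in> F" "\<And>I. I \<in> F \<Longrightarrow> is_ideal R I"
  shows "is_ideal R (\<Inter>F)"
  unfolding is_ideal_def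
proof (intro conjI ballI)
  show "\<Inter>F \<subseteq> R" using assms(1) assms(2)[OF assms(1)] by (auto simp: is_ideal_def)
  show "0 \<in> \<Inter>F" using assms(2) by (auto simp: is_ideal_def)
  show "x + y \<in> \<Inter>F" if "x \<in> \<Inter>F" "y \<in> \<Inter>F" for x y
    using that assms(2) by (auto simp: is_ideal_def)
  show "r * x \<in> \<Inter>F" if "r \<in> R" "x \<in> \<Inter>F" for r x
    using that assms(2) by (auto simp: is_ideal_def)
qed

lemma is_ideal_ideal_gen: "is_ideal R R \<Longrightarrow> X \<subseteq> R \<Longrightarrow> is_ideal R (ideal_gen R X)"
  unfolding ideal_gen_def by (rule is_ideal_Inter[where J = R]) auto

definition vanishing_ideal ::
    "(('w \<Rightarrow>\<^sub>0 nat) \<Rightarrow>\<^sub>0 real) set \<Rightarrow> ('t \<Rightarrow> 'w \<Rightarrow> real) \<Rightarrow> (('w \<Rightarrow>\<^sub>0 nat) \<Rightarrow>\<^sub>0 real) set" where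
  "vanishing_ideal R X = {f \<in> R. \<forall>\<theta>. insertion (X \<theta>) f = 0}"

lemma is_prime_ideal_vanishing_ideal:
  assumes R: "is_ideal R R" "1 \<in> R" and X: "\<And>w. (\<lambda>\<theta>. X \<theta> w) \<in> poly_fun"
  shows "is_prime_ideal R (vanishing_ideal R X)"
  unfolding is_prime_ideal_def
proof (intro conjI ballI impI)
  show "is_ideal R (vanishing_ideal R X)"
    using R(1) by (auto simp: is_ideal_def vanishing_ideal_def insertion_add insertion_mult)
  show "vanishing_ideal R X \<noteq> R"
  proof
    assume "vanishing_ideal R X = R"
    with R(2) have "1 \<in> vanishing_ideal R X" by simp
    then show False by (simp add: vanishing_ideal_def)
  qed
  fix a b assume ab: "a \<in> R" "b \<in> R" "a * b \<in> vanishing_ideal R X"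
  then have "\<And>\<theta>. insertion (X \<theta>) a * insertion (X \<theta>) b = 0"
    by (simp add: vanishing_ideal_def insertion_mult)
  then have "(\<forall>\<theta>. insertion (X \<theta>) a = 0) \<or> (\<forall>\<theta>. insertion (X \<theta>) b = 0)"
    by (rule poly_fun_mult_eq_0D[OF poly_fun_insertion[OF X] poly_fun_insertion[OF X]])
  then show "a \<in> vanishing_ideal R X \<or> b \<in> vanishing_ideal R X"
    using ab by (simp add: vanishing_ideal_def)
qed

lemma saturation_subset_vanishing_ideal:
  assumes "I \<subseteq> vanishing_ideal R X" "\<And>s. s \<in> S \<Longrightarrow> \<exists>\<theta>. insertion (X \<theta>) s \<noteq> 0"
    and X: "\<And>w. (\<lambda>\<theta>. X \<theta> w) \<in> poly_fun"
  shows "saturation R I S \<subseteq> vanishing_ideal R X"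
proof
  fix f assume "f \<in> saturation R I S"
  then obtain s where fs: "f \<in> R" "s \<in> S" "f * s \<in> I" unfolding saturation_def by blast
  with assms(1) have "f * s \<in> vanishing_ideal R X" by blast
  then have "\<And>\<theta>. insertion (X \<theta>) f * insertion (X \<theta>) s = 0"
    by (simp add: vanishing_ideal_def insertion_mult)
  then have "(\<forall>\<theta>. insertion (X \<theta>) f = 0) \<or> (\<forall>\<theta>. insertion (X \<theta>) s = 0)"
    by (rule poly_fun_mult_eq_0D[OF poly_fun_insertion[OF X] poly_fun_insertion[OF X]])
  then have "\<forall>\<theta>. insertion (X \<theta>) f = 0"
    using assms(2)[OF fs(2)] by blast
  with fs(1) show "f \<in> vanishing_ideal R X" by (simp add: vanishing_ideal_def)
qed

section \<open>Matrices\<close>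

lemma sum_set_conv_nth: "distinct L \<Longrightarrow> (\<Sum>k\<in>set L. g k) = (\<Sum>c<length L. g (L ! c))"
  using sum.reindex_bij_betw[OF bij_betw_nth[OF _ refl refl], of L g] by simp

lemma det_nonzero_solve_sum:
  fixes A :: "'k \<Rightarrow> 'k \<Rightarrow> 'a::field"
  assumes L: "distinct L" and D: "det (mat (length L) (length L) (\<lambda>(r, c). A (L ! r) (L ! c))) \<noteq> 0"
  obtains w where "\<And>k. k \<in> set L \<Longrightarrow> (\<Sum>l\<in>set L. A k l * w l) = y k"
proof -
  define n where "n = length L"
  define M where "M = mat n n (\<lambda>(r, c). A (L ! r) (L ! c))"
  have MC: "M \<in> carrier_mat n n" by (simp add: M_def)
  have "M \<in> Units (ring_mat TYPE('a) n ())"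
    using det_non_zero_imp_unit[OF MC] D by (simp add: M_def n_def)
  then obtain B where BC: "B \<in> carrier_mat n n" and MB: "M * B = 1\<^sub>m n"
    by (auto simp: Units_def ring_mat_def)
  define b where "b = vec n (\<lambda>r. y (L ! r))"
  define x where "x = B *\<^sub>v b"
  have "M *\<^sub>v x = (M * B) *\<^sub>v b"
    unfolding x_def by (rule assoc_mult_mat_vec[symmetric, OF MC BC]) (simp add: b_def)
  then have Mx: "M *\<^sub>v x = b" using MB by (simp add: b_def)
  have dim_x: "dim_vec x = n" using BC by (simp add: x_def)
  define idx where "idx = the_inv_into {..<n} ((!) L)"
  have idx: "idx (L ! c) = c" if "c < n" for c
    unfolding idx_def using that L
    by (intro the_inv_into_f_f) (auto simp: n_def inj_on_def nth_eq_iff_index_eq)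
  have "(\<Sum>l\<in>set L. A k l * x $ idx l) = y k" if "k \<in> set L" for k
  proof -
    obtain r where r: "r < n" "k = L ! r" using \<open>k \<in> set L\<close> by (auto simp: in_set_conv_nth n_def)
    have "(\<Sum>l\<in>set L. A k l * x $ idx l) = (\<Sum>c<n. A k (L ! c) * x $ c)"
      using sum_set_conv_nth[OF L, of "\<lambda>l. A k l * x $ idx l"] by (simp add: n_def idx)
    also have "\<dots> = (M *\<^sub>v x) $ r"
      using r dim_x by (simp add: M_def scalar_prod_def atLeast0LessThan)
    also have "\<dots> = y k" using r by (simp add: Mx b_def)
    finally show ?thesis .
  qed
  then show thesis by (rule that)
qed

lemma det_split_corner:
  fixes M :: "'a::comm_ring_1 mat"
  assumes MC: "M \<in> carrier_mat (Suc m) (Suc m)"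
  defines "M0 \<equiv> mat (Suc m) (Suc m) (\<lambda>(r, c). if r = 0 \<and> c = 0 then 0 else M $$ (r, c))"
  shows "det M = M $$ (0, 0) * det (mat_delete M 0 0) + det M0"
proof -
  have M0C: "M0 \<in> carrier_mat (Suc m) (Suc m)" by (simp add: M0_def)
  have del: "mat_delete M0 r 0 = mat_delete M r 0" if "r < Suc m" for r
    by (rule eq_matI) (use MC that in \<open>auto simp: mat_delete_def M0_def\<close>)
  have expand: "det A = A $$ (0, 0) * cofactor A 0 0 + (\<Sum>r<m. A $$ (Suc r, 0) * cofactor A (Suc r) 0)"
    if "A \<in> carrier_mat (Suc m) (Suc m)" for A :: "'a mat"
    using laplace_expansion_column[OF that, of 0] unfolding sum.lessThan_Suc_shift by simp
  have entry: "M0 $$ (Suc r, 0) = M $$ (Suc r, 0)" if "r < m" for r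
    using that by (simp add: M0_def)
  have "(\<Sum>r<m. M $$ (Suc r, 0) * cofactor M (Suc r) 0) = (\<Sum>r<m. M0 $$ (Suc r, 0) * cofactor M0 (Suc r) 0)"
    by (intro sum.cong refl) (simp add: cofactor_def del entry)
  moreover have "M0 $$ (0, 0) = 0" by (simp add: M0_def)
  ultimately show ?thesis
    using expand[OF MC] expand[OF M0C] by (simp add: cofactor_def)
qed

section \<open>The covariance parametrization of a DAG model\<close>

locale ordered_dag =
  fixes p :: nat and E :: "(nat \<times> nat) set"
  assumes ordered: "nat_ordered_dag p E"
begin

lemma pa_bounds: "k \<in> pa E j \<Longrightarrow> 1 \<le> k \<and> k < j \<and> j \<le> p"
  using ordered by (auto simp: nat_ordered_dag_def pa_def)

lemma finite_pa: "finite (pa E j)"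
  by (rule finite_subset[of _ "{..<j}"]) (auto dest: pa_bounds)

text \<open>\<open>\<theta> (k, j)\<close> for \<open>k \<in> pa(j)\<close> is the edge weight \<open>\<lambda>\<^sub>k\<^sub>j\<close> and \<open>\<theta> (j, j)\<close> the error variance
  \<open>\<omega>\<^sub>j\<close>; \<open>cov \<theta>\<close> is \<open>(I - \<Lambda>)\<^sup>-\<^sup>T \<Omega> (I - \<Lambda>)\<^sup>-\<^sup>1\<close>, computed column by column by the recursion
  \<open>\<sigma>\<^sub>a\<^sub>j = \<Sum>\<^sub>k\<^sub>\<in>\<^sub>p\<^sub>a\<^sub>(\<^sub>j\<^sub>) \<lambda>\<^sub>k\<^sub>j \<sigma>\<^sub>a\<^sub>k\<close> for \<open>a < j\<close> and \<open>\<sigma>\<^sub>j\<^sub>j = \<omega>\<^sub>j + \<lambda>\<^sub>j\<^sup>T \<Sigma>\<^bsub>pa(j)\<^esub> \<lambda>\<^sub>j\<close>.\<close>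

function cov :: "(nat \<times> nat \<Rightarrow> real) \<Rightarrow> nat \<Rightarrow> nat \<Rightarrow> real" where
  "cov \<theta> a b =
    (if a < b then (\<Sum>k\<in>pa E b. \<theta> (k, b) * cov \<theta> a k)
     else if a = b then \<theta> (a, a) + (\<Sum>k\<in>pa E a. \<Sum>l\<in>pa E a. \<theta> (k, a) * \<theta> (l, a) * cov \<theta> k l)
     else cov \<theta> b a)"
  by pat_completeness auto
termination
  by (relation "measure (\<lambda>(\<theta>, a, b). 2 * max a b + (if b < a then 1 else 0))")
    (auto dest: pa_bounds)

declare cov.simps [simp del]

lemma cov_less: "a < b \<Longrightarrow> cov \<theta> a b = (\<Sum>k\<in>pa E b. \<theta> (k, b) * cov \<theta> a k)"
  by (simp add: cov.simps)

lemma cov_diag: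
  "cov \<theta> a a = \<theta> (a, a) + (\<Sum>k\<in>pa E a. \<Sum>l\<in>pa E a. \<theta> (k, a) * \<theta> (l, a) * cov \<theta> k l)"
  by (simp add: cov.simps)

lemma cov_sym: "cov \<theta> a b = cov \<theta> b a"
  by (cases a b rule: linorder_cases) (simp_all add: cov.simps[of \<theta> a b] cov.simps[of \<theta> b a])

lemma poly_fun_cov: "(\<lambda>\<theta>. cov \<theta> a b) \<in> poly_fun"
proof (induction "max a b" arbitrary: a b rule: less_induct)
  case less
  have lt: "(\<lambda>\<theta>. cov \<theta> x y) \<in> poly_fun" if "x < y" "max x y = max a b" for x y
  proof -
    have "(\<lambda>\<theta>. cov \<theta> x y) = (\<lambda>\<theta>. \<Sum>k\<in>pa E y. \<theta> (k, y) * cov \<theta> x k)"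
      using that by (simp add: cov_less)
    also have "\<dots> \<in> poly_fun"
    proof (rule poly_fun_sum)
      fix k assume "k \<in> pa E y"
      then have "max x k < max a b" using that pa_bounds by fastforce
      then show "(\<lambda>\<theta>. \<theta> (k, y) * cov \<theta> x k) \<in> poly_fun" by (intro poly_fun_mult poly_fun_coord less)
    qed
    finally show ?thesis .
  qed
  show ?case
  proof (cases a b rule: linorder_cases)
    case equal
    have "(\<lambda>\<theta>. cov \<theta> a b) =
        (\<lambda>\<theta>. \<theta> (a, a) + (\<Sum>k\<in>pa E a. \<Sum>l\<in>pa E a. \<theta> (k, a) * \<theta> (l, a) * cov \<theta> k l))"
      using equal by (simp add: cov_diag)
    also have "\<dots> \<in> poly_fun"
    proof (intro poly_fun_add poly_fun_coord poly_fun_sum)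
      fix k l assume "k \<in> pa E a" "l \<in> pa E a"
      then have "max k l < max a b" using equal pa_bounds by fastforce
      then show "(\<lambda>\<theta>. \<theta> (k, a) * \<theta> (l, a) * cov \<theta> k l) \<in> poly_fun"
        by (intro poly_fun_mult poly_fun_coord less)
    qed
    finally show ?thesis .
  qed (use lt[of a b] lt[of b a] in \<open>simp_all add: cov_sym[of _ a b] max.commute\<close>)
qed

lemma cov_cong:
  assumes agree: "\<And>v. snd v < j \<Longrightarrow> \<theta> v = \<theta>' v"
  shows "a < j \<Longrightarrow> b < j \<Longrightarrow> cov \<theta> a b = cov \<theta>' a b"
proof (induction "max a b" arbitrary: a b rule: less_induct)
  case less
  have lt: "cov \<theta> x y = cov \<theta>' x y" if "x < y" "max x y = max a b" for x y
  proof -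
    have "cov \<theta> x y = (\<Sum>k\<in>pa E y. \<theta> (k, y) * cov \<theta> x k)" using that by (simp add: cov_less)
    also have "\<dots> = (\<Sum>k\<in>pa E y. \<theta>' (k, y) * cov \<theta>' x k)"
    proof (rule sum.cong[OF refl])
      fix k assume "k \<in> pa E y"
      then have "max x k < max a b" "k < j" "x < j" using that less.prems pa_bounds by fastforce+
      moreover have "\<theta> (k, y) = \<theta>' (k, y)" using agree less.prems that by auto
      ultimately show "\<theta> (k, y) * cov \<theta> x k = \<theta>' (k, y) * cov \<theta>' x k" using less by simp
    qed
    also have "\<dots> = cov \<theta>' x y" using that by (simp add: cov_less)
    finally show ?thesis .
  qed
  show ?case
  proof (cases a b rule: linorder_cases)
    case equal
    have "cov \<theta> a a = \<theta> (a, a) + (\<Sum>k\<in>pa E a. \<Sum>l\<in>pa E a. \<theta> (k, a) * \<theta> (l, a) * cov \<theta> k l)"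
      by (rule cov_diag)
    also have "\<dots> = \<theta>' (a, a) + (\<Sum>k\<in>pa E a. \<Sum>l\<in>pa E a. \<theta>' (k, a) * \<theta>' (l, a) * cov \<theta>' k l)"
    proof (intro arg_cong2[where f = "(+)"] sum.cong refl)
      show "\<theta> (a, a) = \<theta>' (a, a)" using agree less.prems by auto
      fix k l assume "k \<in> pa E a" "l \<in> pa E a"
      then have "max k l < max a b" "k < j" "l < j" using equal less.prems pa_bounds by fastforce+
      moreover have "\<theta> (k, a) = \<theta>' (k, a)" "\<theta> (l, a) = \<theta>' (l, a)" using agree less.prems by auto
      ultimately show "\<theta> (k, a) * \<theta> (l, a) * cov \<theta> k l = \<theta>' (k, a) * \<theta>' (l, a) * cov \<theta>' k l"
        using less by simp
    qed
    also have "\<dots> = cov \<theta>' a a" by (rule cov_diag[symmetric])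
    finally show ?thesis using equal by simp
  qed (use lt[of a b] lt[of b a] in \<open>simp_all add: cov_sym[of _ a b] max.commute\<close>)
qed

definition param :: "(nat \<times> nat \<Rightarrow> real) \<Rightarrow> nat \<times> nat \<Rightarrow> real" where
  "param \<theta> v = cov \<theta> (fst v) (snd v)"

lemma poly_fun_param: "(\<lambda>\<theta>. param \<theta> v) \<in> poly_fun"
  by (simp add: param_def poly_fun_cov)

lemma insertion_param_sigma [simp]: "insertion (param \<theta>) (sigma a b) = cov \<theta> a b"
  by (simp add: sigma_eq_var param_def min_def max_def cov_sym)

text \<open>For \<open>a < j\<close> the recursion \<open>\<sigma>\<^sub>a\<^sub>j = \<Sum>\<^sub>k \<lambda>\<^sub>k\<^sub>j \<sigma>\<^sub>a\<^sub>k\<close> says that the column \<open>j\<close> of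
  \<open>\<Sigma>\<^bsub>(i, pa(j)), (j, pa(j))\<^esub>\<close> is a combination of the others.\<close>

lemma insertion_param_cond_det:
  assumes "i < j"
  shows "insertion (param \<theta>) (cond_det i j (pa E j)) = 0"
proof -
  define L where "L = sorted_list_of_set (pa E j)"
  have L: "distinct L" "set L = pa E j" using finite_pa by (simp_all add: L_def)
  define n where "n = Suc (length L)"
  define N where "N = mat n n (\<lambda>(r, c). cov \<theta> ((i # L) ! r) ((j # L) ! c))"
  define v where "v = vec n (\<lambda>c. if c = 0 then 1 else - \<theta> (L ! (c - 1), j))"
  have NC: "N \<in> carrier_mat n n" by (simp add: N_def)
  have "N *\<^sub>v v = 0\<^sub>v n"
  proof (rule eq_vecI)
    fix r assume "r < dim_vec (0\<^sub>v n :: real vec)"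
    then have r: "r < n" by simp
    define a where "a = (i # L) ! r"
    have "a \<in> insert i (pa E j)" using r L by (cases r) (auto simp: a_def n_def)
    then have "a < j" using assms pa_bounds by blast
    have "(N *\<^sub>v v) $ r = (\<Sum>c<n. N $$ (r, c) * v $ c)"
      using r NC by (simp add: scalar_prod_def N_def v_def atLeast0LessThan)
    also have "\<dots> = N $$ (r, 0) * v $ 0 + (\<Sum>c<length L. N $$ (r, Suc c) * v $ Suc c)"
      unfolding n_def by (rule sum.lessThan_Suc_shift)
    also have "\<dots> = cov \<theta> a j * 1 + (\<Sum>c<length L. cov \<theta> a (L ! c) * - \<theta> (L ! c, j))"
      using r by (intro arg_cong2[where f = "(+)"] sum.cong) (simp_all add: N_def v_def n_def a_def)
    also have "\<dots> = cov \<theta> a j - (\<Sum>c<length L. \<theta> (L ! c, j) * cov \<theta> a (L ! c))"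
      by (simp add: sum_negf mult.commute)
    also have "cov \<theta> a j = (\<Sum>k\<in>set L. \<theta> (k, j) * cov \<theta> a k)"
      using \<open>a < j\<close> by (simp add: cov_less L(2))
    also have "\<dots> = (\<Sum>c<length L. \<theta> (L ! c, j) * cov \<theta> a (L ! c))"
      by (rule sum_set_conv_nth[OF L(1)])
    finally show "(N *\<^sub>v v) $ r = 0\<^sub>v n $ r" using r by simp
  qed (simp add: N_def)
  moreover have "v \<in> carrier_vec n" by (simp add: v_def)
  moreover have "v $ 0 \<noteq> 0\<^sub>v n $ 0" by (simp add: v_def n_def)
  then have "v \<noteq> 0\<^sub>v n" by metis
  ultimately have "det N = 0" using det_0_iff_vec_prod_zero_field[OF NC] by blast
  moreover have "insertion (param \<theta>) (cond_det i j (pa E j)) = det N"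
    unfolding cond_det_def insertion_subdet N_def n_def L_def by simp
  ultimately show ?thesis by simp
qed

text \<open>\<open>\<Lambda> = 0\<close> and \<open>\<Omega> = I\<close>.\<close>

definition theta_id :: "nat \<times> nat \<Rightarrow> real" where
  "theta_id v = (if fst v = snd v then 1 else 0)"

lemma cov_theta_id: "cov theta_id a b = (if a = b then 1 else 0)"
proof -
  have lt: "cov theta_id x y = 0" if "x < y" for x y
    using that by (auto simp: cov_less theta_id_def intro!: sum.neutral dest: pa_bounds)
  show ?thesis
  proof (cases a b rule: linorder_cases)
    case equal
    then show ?thesis by (auto simp: cov_diag theta_id_def intro!: sum.neutral dest: pa_bounds)
  qed (use lt[of a b] lt[of b a] in \<open>simp_all add: cov_sym[of _ a b]\<close>)
qed

lemma insertion_param_theta_id_princ_det: "insertion (param theta_id) (princ_det K) = 1"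
proof -
  define L where "L = sorted_list_of_set K"
  have "distinct L" by (simp add: L_def)
  then have "mat (length L) (length L) (\<lambda>(r, c). cov theta_id (L ! r) (L ! c)) = 1\<^sub>m (length L)"
    by (intro eq_matI) (auto simp: cov_theta_id nth_eq_iff_index_eq)
  then show ?thesis by (simp add: princ_det_def insertion_subdet L_def)
qed

lemma cov_column_below:
  assumes below: "\<And>v. snd v < j \<Longrightarrow> \<theta>' v = \<theta> v" and col: "\<And>l. l \<in> pa E j \<Longrightarrow> \<theta>' (l, j) = w l"
    and "k < j"
  shows "cov \<theta>' k j = (\<Sum>l\<in>pa E j. cov \<theta> k l * w l)"
proof -
  have "cov \<theta>' k j = (\<Sum>l\<in>pa E j. \<theta>' (l, j) * cov \<theta>' k l)" using \<open>k < j\<close> by (rule cov_less)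
  also have "\<dots> = (\<Sum>l\<in>pa E j. cov \<theta> k l * w l)"
  proof (rule sum.cong[OF refl])
    fix l assume l: "l \<in> pa E j"
    then have "l < j" using pa_bounds by blast
    with l \<open>k < j\<close> show "\<theta>' (l, j) * cov \<theta>' k l = cov \<theta> k l * w l"
      by (simp add: col cov_cong[OF below] mult.commute)
  qed
  finally show ?thesis .
qed

text \<open>Where \<open>|\<Sigma>\<^bsub>pa(j)\<^esub>| \<noteq> 0\<close>, the edge weights of column \<open>j\<close> solve
  \<open>\<Sigma>\<^bsub>pa(j)\<^esub> \<lambda>\<^sub>j = (y\<^sub>k\<^sub>j)\<^sub>k\<close>, and then \<open>\<omega>\<^sub>j\<close> is chosen to match \<open>y\<^sub>j\<^sub>j\<close>.\<close>

lemma cov_solve_column: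
  assumes D: "insertion (param \<theta>) (princ_det (pa E j)) \<noteq> 0"
  obtains \<theta>' where "\<And>v. snd v < j \<Longrightarrow> \<theta>' v = \<theta> v"
    and "\<And>k. k \<in> pa E j \<Longrightarrow> cov \<theta>' k j = y (k, j)" and "cov \<theta>' j j = y (j, j)"
proof -
  define L where "L = sorted_list_of_set (pa E j)"
  have L: "distinct L" "set L = pa E j" using finite_pa by (simp_all add: L_def)
  have "det (mat (length L) (length L) (\<lambda>(r, c). cov \<theta> (L ! r) (L ! c))) \<noteq> 0"
    using D by (simp add: princ_det_def insertion_subdet L_def)
  then obtain w where w: "\<And>k. k \<in> set L \<Longrightarrow> (\<Sum>l\<in>set L. cov \<theta> k l * w l) = y (k, j)"
    using det_nonzero_solve_sum[OF L(1), where y = "\<lambda>k. y (k, j)"] by blast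
  define \<theta>1 where "\<theta>1 v = (if snd v = j \<and> fst v \<in> pa E j then w (fst v) else \<theta> v)" for v
  define \<omega> where "\<omega> = y (j, j) - (\<Sum>k\<in>pa E j. \<Sum>l\<in>pa E j. \<theta>1 (k, j) * \<theta>1 (l, j) * cov \<theta>1 k l)"
  define \<theta>' where "\<theta>' = \<theta>1((j, j) := \<omega>)"
  have below: "\<theta>' v = \<theta> v" if "snd v < j" for v
    using that by (auto simp: \<theta>'_def \<theta>1_def)
  have below1: "\<theta>1 v = \<theta> v" if "snd v < j" for v
    using that by (auto simp: \<theta>1_def)
  have cov_below: "cov \<theta>' a b = cov \<theta> a b" "cov \<theta>1 a b = cov \<theta> a b" if "a < j" "b < j" for a b
    using that by (simp_all add: cov_cong[OF below] cov_cong[OF below1])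
  have col_w: "\<theta>' (l, j) = w l" if "l \<in> pa E j" for l
    using that pa_bounds[OF that] by (simp add: \<theta>'_def \<theta>1_def)
  have col: "cov \<theta>' k j = y (k, j)" if k: "k \<in> pa E j" for k
  proof -
    have "k < j" using k pa_bounds by blast
    then have "cov \<theta>' k j = (\<Sum>l\<in>pa E j. cov \<theta> k l * w l)"
      by (rule cov_column_below[rotated 2]) (simp_all add: below col_w)
    also have "\<dots> = y (k, j)" using w k L(2) by simp
    finally show ?thesis .
  qed
  have "cov \<theta>' j j = y (j, j)"
  proof -
    have "(\<Sum>k\<in>pa E j. \<Sum>l\<in>pa E j. \<theta>' (k, j) * \<theta>' (l, j) * cov \<theta>' k l)
        = (\<Sum>k\<in>pa E j. \<Sum>l\<in>pa E j. \<theta>1 (k, j) * \<theta>1 (l, j) * cov \<theta>1 k l)"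
    proof (intro sum.cong refl)
      fix k l assume "k \<in> pa E j" "l \<in> pa E j"
      then have "k < j" "l < j" using pa_bounds by blast+
      moreover have "\<theta>' (k, j) = \<theta>1 (k, j)" "\<theta>' (l, j) = \<theta>1 (l, j)"
        using \<open>k < j\<close> \<open>l < j\<close> by (simp_all add: \<theta>'_def)
      ultimately show "\<theta>' (k, j) * \<theta>' (l, j) * cov \<theta>' k l = \<theta>1 (k, j) * \<theta>1 (l, j) * cov \<theta>1 k l"
        by (simp add: cov_below)
    qed
    moreover have "\<theta>' (j, j) = \<omega>" by (simp add: \<theta>'_def)
    ultimately show ?thesis by (simp add: cov_diag[of \<theta>' j] \<omega>_def)
  qed
  with below col show thesis by (rule that)
qed

section \<open>Algebraic independence of the free variables\<close>

definition free_vars :: "(nat \<times> nat) set" where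
  "free_vars = {(a, b). 1 \<le> a \<and> a \<le> b \<and> b \<le> p \<and> (a = b \<or> (a, b) \<in> E)}"

definition free_below :: "nat \<Rightarrow> (nat \<times> nat) set" where
  "free_below j = {v \<in> free_vars. snd v < j}"

definition free_col :: "nat \<Rightarrow> (nat \<times> nat) set" where
  "free_col j = {v \<in> free_vars. snd v = j}"

lemma param_override_free_col:
  assumes "insertion (param \<theta>) (princ_det (pa E j)) \<noteq> 0"
  obtains \<theta>' where
    "\<And>v. v \<in> free_below (Suc j) \<Longrightarrow> override_on (param \<theta>) y (free_col j) v = param \<theta>' v"
proof -
  obtain \<theta>' where below: "\<And>v. snd v < j \<Longrightarrow> \<theta>' v = \<theta> v"
    and col: "\<And>k. k \<in> pa E j \<Longrightarrow> cov \<theta>' k j = y (k, j)" and diag: "cov \<theta>' j j = y (j, j)"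
    by (rule cov_solve_column[OF assms, where y = y]) blast
  have "override_on (param \<theta>) y (free_col j) v = param \<theta>' v" if v: "v \<in> free_below (Suc j)" for v
  proof (cases v)
    case (Pair a b)
    show ?thesis
    proof (cases "b = j")
      case True
      then have "v \<in> free_col j" "a = j \<or> a \<in> pa E j"
        using v Pair by (auto simp: free_below_def free_col_def free_vars_def pa_def)
      then show ?thesis using Pair True col diag by (auto simp: param_def)
    next
      case False
      then have "v \<notin> free_col j" "a < j" "b < j"
        using v Pair by (auto simp: free_below_def free_col_def free_vars_def)
      then show ?thesis using Pair by (simp add: param_def cov_cong[OF below])
    qed
  qed
  then show thesis by (rule that)
qed

text \<open>Induction on \<open>B\<close>: the coordinates in \<open>B\<close> take arbitrary values, so the coefficients
  of the expansion in one of them vanish; for \<open>B = {}\<close> the factor \<open>|\<Sigma>\<^bsub>pa(j)\<^esub>|\<close> cancels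
  because polynomial functions have no zero divisors.\<close>

lemma free_col_independent:
  assumes IH: "\<And>g. g \<in> polys_in (free_below j) \<Longrightarrow> \<forall>\<theta>. insertion (param \<theta>) g = 0 \<Longrightarrow> g = 0"
  shows "finite B \<Longrightarrow> B \<subseteq> free_col j \<Longrightarrow> g \<in> polys_in (free_below j \<union> B) \<Longrightarrow>
    (\<And>\<theta> y. insertion (param \<theta>) (princ_det (pa E j)) \<noteq> 0 \<Longrightarrow>
      insertion (override_on (param \<theta>) y B) g = 0) \<Longrightarrow> g = 0"
proof (induction B arbitrary: g rule: finite_induct)
  case empty
  have "insertion (param \<theta>) g * insertion (param \<theta>) (princ_det (pa E j)) = 0" for \<theta>
    using empty.prems(3)[of \<theta> undefined]
    by (cases "insertion (param \<theta>) (princ_det (pa E j)) = 0") auto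
  then have "(\<forall>\<theta>. insertion (param \<theta>) g = 0) \<or> (\<forall>\<theta>. insertion (param \<theta>) (princ_det (pa E j)) = 0)"
    by (rule poly_fun_mult_eq_0D[OF poly_fun_insertion[OF poly_fun_param] poly_fun_insertion[OF poly_fun_param]])
  moreover have "insertion (param theta_id) (princ_det (pa E j)) \<noteq> 0"
    by (simp add: insertion_param_theta_id_princ_det)
  ultimately have "\<forall>\<theta>. insertion (param \<theta>) g = 0" by blast
  then show "g = 0" using IH[of g] empty.prems(2) by simp
next
  case (insert b B)
  have notin: "b \<notin> free_below j \<union> B"
    using insert.hyps(2) insert.prems(1) by (auto simp: free_below_def free_col_def)
  have "g \<in> polys_in (insert b (free_below j \<union> B))" using insert.prems(2) by simp
  then obtain N a where a: "\<And>k. a k \<in> polys_in (free_below j \<union> B)" "\<And>k. N < k \<Longrightarrow> a k = 0"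
    and g: "g = (\<Sum>k\<le>N. a k * var b ^ k)"
    by (rule poly_expansion_in_var) blast
  have "a k = 0" for k
  proof (rule insert.IH)
    show "B \<subseteq> free_col j" using insert.prems(1) by simp
    show "a k \<in> polys_in (free_below j \<union> B)" by (rule a(1))
    fix \<theta> y assume D: "insertion (param \<theta>) (princ_det (pa E j)) \<noteq> 0"
    show "insertion (override_on (param \<theta>) y B) (a k) = 0"
    proof (cases "k \<le> N")
      case True
      have "insertion ((override_on (param \<theta>) y B)(b := t)) (\<Sum>k\<le>N. a k * var b ^ k) = 0" for t
      proof -
        have "(override_on (param \<theta>) y B)(b := t) = override_on (param \<theta>) (y(b := t)) (insert b B)"
          using notin by (auto simp: override_on_def fun_eq_iff)
        then show ?thesis using insert.prems(3)[OF D, of "y(b := t)"] by (simp only: g)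
      qed
      from insertion_coeffs_eq_0[OF a(1) notin this True] show ?thesis .
    qed (simp add: a(2))
  qed
  then show "g = 0" using g by simp
qed

lemma free_below_independent:
  "g \<in> polys_in (free_below j) \<Longrightarrow> \<forall>\<theta>. insertion (param \<theta>) g = 0 \<Longrightarrow> g = 0"
proof (induction j arbitrary: g)
  case 0
  then show ?case using polys_in_empty_eq_0[of g "param theta_id"] by (simp add: free_below_def)
next
  case (Suc j)
  have split: "free_below (Suc j) = free_below j \<union> free_col j"
    by (auto simp: free_below_def free_col_def)
  have fin: "finite (free_col j)"
    by (rule finite_subset[of _ "{0..p} \<times> {0..p}"]) (auto simp: free_col_def free_vars_def)
  have mem: "g \<in> polys_in (free_below j \<union> free_col j)" using Suc.prems(1) split by simp
  show ?case
  proof (rule free_col_independent[OF Suc.IH fin subset_refl mem])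
    fix \<theta> y assume "insertion (param \<theta>) (princ_det (pa E j)) \<noteq> 0"
    then obtain \<theta>' where
      \<theta>': "\<And>v. v \<in> free_below (Suc j) \<Longrightarrow> override_on (param \<theta>) y (free_col j) v = param \<theta>' v"
      by (rule param_override_free_col[where y = y]) blast
    have "insertion (override_on (param \<theta>) y (free_col j)) g = insertion (param \<theta>') g"
      using Suc.prems(1) \<theta>' by (rule insertion_cong)
    then show "insertion (override_on (param \<theta>) y (free_col j)) g = 0" using Suc.prems(2) by simp
  qed
qed

lemma free_vars_independent:
  assumes "g \<in> polys_in free_vars" "\<forall>\<theta>. insertion (param \<theta>) g = 0"
  shows "g = 0"
proof -
  have "free_below (Suc p) = free_vars" by (auto simp: free_below_def free_vars_def)
  then show ?thesis using free_below_independent[of g "Suc p"] assms by simp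
qed

section \<open>Elimination of the dependent variables\<close>

definition dep_vars :: "(nat \<times> nat) set" where
  "dep_vars = {(i, j). 1 \<le> i \<and> i < j \<and> j \<le> p \<and> (i, j) \<notin> E}"

text \<open>The dependent variables are eliminated in the order of \<open>rank\<close>, i.e. column by column;
  \<open>elim_vars n\<close> are the variables left after those of rank \<open>\<ge> n\<close> have been eliminated.\<close>

definition rank :: "nat \<times> nat \<Rightarrow> nat" where
  "rank v = snd v * (p + 1) + fst v + 1"

definition elim_vars :: "nat \<Rightarrow> (nat \<times> nat) set" where
  "elim_vars n = free_vars \<union> {d \<in> dep_vars. rank d < n}"

lemma RSigma_eq: "RSigma p = polys_in (free_vars \<union> dep_vars)"
proof -
  have "{(i, j). 1 \<le> i \<and> i \<le> j \<and> j \<le> p} = free_vars \<union> dep_vars"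
    by (auto simp: free_vars_def dep_vars_def)
  then show ?thesis by (simp only: RSigma_def polys_in_def)
qed

lemma rank_inj:
  assumes "fst v \<le> p" "fst w \<le> p" "rank v = rank w"
  shows "v = w"
proof -
  have eq: "fst v + snd v * (p + 1) = fst w + snd w * (p + 1)"
    using assms(3) by (simp add: rank_def)
  have "(fst u + snd u * (p + 1)) div (p + 1) = snd u" if "fst u \<le> p" for u
    using that by (subst div_mult_self1) auto
  from this[OF assms(1)] this[OF assms(2)] eq have "snd v = snd w" by simp
  with eq show "v = w" by (simp add: prod_eq_iff)
qed

lemma elim_vars_Suc:
  assumes "d \<in> dep_vars" "rank d = n"
  shows "elim_vars (Suc n) = insert d (elim_vars n)"
proof -
  have uniq: "e = d" if "e \<in> dep_vars" "rank e = n" for e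
    using that assms by (intro rank_inj) (auto simp: dep_vars_def)
  have "e \<in> elim_vars (Suc n) \<longleftrightarrow> e \<in> insert d (elim_vars n)" for e
    using assms uniq[of e] by (auto simp: elim_vars_def less_Suc_eq)
  then show ?thesis by blast
qed

lemma elim_vars_Suc_same: "\<not> (\<exists>d\<in>dep_vars. rank d = n) \<Longrightarrow> elim_vars (Suc n) = elim_vars n"
  by (auto simp: elim_vars_def less_Suc_eq)

lemma elim_vars_subset: "elim_vars n \<subseteq> free_vars \<union> dep_vars"
  by (auto simp: elim_vars_def)

lemma all_vars_subset_elim_vars: "free_vars \<union> dep_vars \<subseteq> elim_vars (Suc ((p + 1) * (p + 1)))"
proof -
  have "rank v < Suc ((p + 1) * (p + 1))" if "v \<in> dep_vars" for v
  proof -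
    have "fst v \<le> p" "snd v \<le> p" using that by (auto simp: dep_vars_def)
    moreover from \<open>snd v \<le> p\<close> have "snd v * (p + 1) \<le> p * (p + 1)" by (rule mult_le_mono1)
    ultimately show ?thesis unfolding rank_def by (simp add: algebra_simps)
  qed
  then show ?thesis by (auto simp: elim_vars_def)
qed

lemma sigma_in_elim_vars:
  assumes "1 \<le> a" "1 \<le> b" "a < j" "b < j" "j \<le> p" "j * (p + 1) < n"
  shows "sigma a b \<in> polys_in (elim_vars n)"
  unfolding sigma_eq_var
proof (rule polys_in_var)
  show "(min a b, max a b) \<in> elim_vars n"
  proof (cases "min a b = max a b \<or> (min a b, max a b) \<in> E")
    case True
    then show ?thesis using assms by (auto simp: elim_vars_def free_vars_def)
  next
    case False
    then have "(min a b, max a b) \<in> dep_vars" using assms by (auto simp: dep_vars_def)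
    moreover have "max a b * (p + 1) + min a b + 1 \<le> j * (p + 1)"
    proof -
      have "(max a b + 1) * (p + 1) \<le> j * (p + 1)" using assms by (intro mult_le_mono1) simp
      then show ?thesis using assms by (simp add: algebra_simps)
    qed
    ultimately show ?thesis using assms(6) by (simp add: elim_vars_def rank_def)
  qed
qed

lemma princ_det_in_elim_vars:
  assumes "j \<le> p" "j * (p + 1) < n"
  shows "princ_det (pa E j) \<in> polys_in (elim_vars n)"
  unfolding princ_det_def subdet_def
proof (rule polys_in_det)
  let ?L = "sorted_list_of_set (pa E j)"
  fix r c assume "r < length ?L" "c < length ?L"
  then have "?L ! r \<in> set ?L" "?L ! c \<in> set ?L" by simp_all
  then have "?L ! r \<in> pa E j" "?L ! c \<in> pa E j" using finite_pa[of j] by simp_all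
  then have "1 \<le> ?L ! r" "?L ! r < j" "1 \<le> ?L ! c" "?L ! c < j" using pa_bounds by blast+
  then show "mat (length ?L) (length ?L) (\<lambda>(r, c). sigma (?L ! r) (?L ! c)) $$ (r, c) \<in> polys_in (elim_vars n)"
    using \<open>r < _\<close> \<open>c < _\<close> assms by (simp add: sigma_in_elim_vars)
qed simp

lemma cond_det_entry_in_elim_vars:
  assumes ij: "(i, j) \<in> dep_vars" and "a \<in> insert i (pa E j)" "b \<in> insert j (pa E j)"
    and "a \<in> pa E j \<or> b \<in> pa E j"
  shows "sigma a b \<in> polys_in (elim_vars (rank (i, j)))"
proof (cases "b = j")
  case True
  then have a: "a \<in> pa E j" using assms(4) pa_bounds by blast
  then have "1 \<le> a" "a < j" "j \<le> p" using pa_bounds by blast+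
  with a have "(a, j) \<in> free_vars" by (simp add: free_vars_def pa_def)
  then show ?thesis using True \<open>a < j\<close> by (simp add: sigma_eq_var elim_vars_def polys_in_var)
next
  case False
  then have "b \<in> pa E j" using assms(3) by simp
  then have "1 \<le> b" "b < j" "j \<le> p" using pa_bounds by blast+
  moreover have "1 \<le> a" "a < j" using assms(2) ij pa_bounds by (auto simp: dep_vars_def)
  moreover have "j * (p + 1) < rank (i, j)" by (simp add: rank_def)
  ultimately show ?thesis by (simp add: sigma_in_elim_vars)
qed

text \<open>Expanding along the first column separates the corner \<open>\<sigma>\<^sub>i\<^sub>j\<close> from the earlier variables.\<close>

lemma cond_det_decomp:
  assumes ij: "(i, j) \<in> dep_vars"
  obtains h where "h \<in> polys_in (elim_vars (rank (i, j)))"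
    and "cond_det i j (pa E j) = princ_det (pa E j) * var (i, j) - h"
proof -
  define L where "L = sorted_list_of_set (pa E j)"
  have L: "set L = pa E j" using finite_pa by (simp add: L_def)
  define m where "m = length L"
  define M where "M = mat (Suc m) (Suc m) (\<lambda>(r, c). sigma ((i # L) ! r) ((j # L) ! c))"
  define M0 where "M0 = mat (Suc m) (Suc m) (\<lambda>(r, c). if r = 0 \<and> c = 0 then 0 else M $$ (r, c))"
  have "i < j" using ij by (simp add: dep_vars_def)
  have "det M = M $$ (0, 0) * det (mat_delete M 0 0) + det M0"
    unfolding M0_def by (rule det_split_corner) (simp add: M_def)
  moreover have "mat_delete M 0 0 = mat m m (\<lambda>(r, c). sigma (L ! r) (L ! c))"
    by (rule eq_matI) (auto simp: mat_delete_def M_def)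
  moreover have "M $$ (0, 0) = var (i, j)" using \<open>i < j\<close> by (simp add: M_def sigma_eq_var)
  moreover have "cond_det i j (pa E j) = det M"
    by (simp add: cond_det_def subdet_def M_def L_def m_def)
  moreover have "princ_det (pa E j) = det (mat m m (\<lambda>(r, c). sigma (L ! r) (L ! c)))"
    by (simp add: princ_det_def subdet_def L_def m_def)
  ultimately have eq: "cond_det i j (pa E j) = princ_det (pa E j) * var (i, j) - (- det M0)"
    by (simp add: mult.commute)
  have "det M0 \<in> polys_in (elim_vars (rank (i, j)))"
  proof (rule polys_in_det)
    fix r c assume rc: "r < Suc m" "c < Suc m"
    show "M0 $$ (r, c) \<in> polys_in (elim_vars (rank (i, j)))"
    proof (cases "r = 0 \<and> c = 0")
      case False
      have "r \<noteq> 0 \<Longrightarrow> L ! (r - 1) \<in> pa E j" "c \<noteq> 0 \<Longrightarrow> L ! (c - 1) \<in> pa E j"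
        using rc by (simp_all add: m_def flip: L)
      then have "(i # L) ! r \<in> insert i (pa E j)" "(j # L) ! c \<in> insert j (pa E j)"
        and "(i # L) ! r \<in> pa E j \<or> (j # L) ! c \<in> pa E j"
        using False by (auto simp: nth_Cons')
      then have "sigma ((i # L) ! r) ((j # L) ! c) \<in> polys_in (elim_vars (rank (i, j)))"
        by (rule cond_det_entry_in_elim_vars[OF ij])
      then show ?thesis using rc False by (simp add: M0_def M_def)
    qed (simp add: M0_def)
  qed (simp add: M0_def)
  then show thesis using that[OF polys_in_uminus eq] by blast
qed

definition cond_dets :: "rpoly set" where
  "cond_dets = {cond_det i j (pa E j) | i j. (i, j) \<in> dep_vars}"

lemma I_G_eq: "I_G p E = ideal_gen (RSigma p) cond_dets"
  by (simp add: I_G_def cond_dets_def dep_vars_def)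

lemma is_ideal_RSigma: "is_ideal (RSigma p) (RSigma p)"
  by (auto simp: is_ideal_def RSigma_eq intro: polys_in_add polys_in_mult)

lemma princ_det_in_RSigma: "j \<le> p \<Longrightarrow> princ_det (pa E j) \<in> RSigma p"
  unfolding RSigma_eq
  by (rule polys_in_mono[OF elim_vars_subset princ_det_in_elim_vars[of j "Suc (j * (p + 1))"]]) auto

lemma cond_det_in_RSigma:
  assumes ij: "(i, j) \<in> dep_vars"
  shows "cond_det i j (pa E j) \<in> RSigma p"
proof -
  obtain h where h: "h \<in> polys_in (elim_vars (rank (i, j)))"
    and eq: "cond_det i j (pa E j) = princ_det (pa E j) * var (i, j) - h"
    by (rule cond_det_decomp[OF ij])
  have "h \<in> RSigma p" unfolding RSigma_eq by (rule polys_in_mono[OF elim_vars_subset h])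
  moreover have "princ_det (pa E j) \<in> RSigma p" using ij by (intro princ_det_in_RSigma) (simp add: dep_vars_def)
  moreover have "var (i, j) \<in> RSigma p" using ij by (simp add: RSigma_eq polys_in_var)
  ultimately show ?thesis unfolding eq RSigma_eq by (intro polys_in_diff polys_in_mult)
qed

lemma is_ideal_I_G: "is_ideal (RSigma p) (I_G p E)"
  unfolding I_G_eq using cond_det_in_RSigma
  by (intro is_ideal_ideal_gen is_ideal_RSigma) (auto simp: cond_dets_def)

lemma cond_det_in_I_G: "(i, j) \<in> dep_vars \<Longrightarrow> cond_det i j (pa E j) \<in> I_G p E"
  unfolding I_G_eq using ideal_gen_superset[of cond_dets "RSigma p"] by (auto simp: cond_dets_def)

definition param_ideal :: "rpoly set" where
  "param_ideal = vanishing_ideal (RSigma p) param"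

lemma is_prime_param_ideal: "is_prime_ideal (RSigma p) param_ideal"
  unfolding param_ideal_def
  by (rule is_prime_ideal_vanishing_ideal[OF is_ideal_RSigma _ poly_fun_param]) (simp add: RSigma_eq)

lemma I_G_subset_param_ideal: "I_G p E \<subseteq> param_ideal"
  unfolding I_G_eq
proof (rule ideal_gen_least)
  show "is_ideal (RSigma p) param_ideal"
    using is_prime_param_ideal by (simp add: is_prime_ideal_def)
  show "cond_dets \<subseteq> param_ideal"
    using cond_det_in_RSigma insertion_param_cond_det
    by (auto simp: cond_dets_def param_ideal_def vanishing_ideal_def dep_vars_def)
qed

lemma S_G_subset_RSigma: "S_G p E \<subseteq> RSigma p"
  using princ_det_in_RSigma
  by (auto simp: S_G_def RSigma_eq intro!: polys_in_prod polys_in_power)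

lemma insertion_param_theta_id_S_G: "s \<in> S_G p E \<Longrightarrow> insertion (param theta_id) s = 1"
  by (auto simp: S_G_def insertion_hom.hom_prod insertion_hom.hom_power
      insertion_param_theta_id_princ_det)

lemma one_in_S_G: "1 \<in> S_G p E"
  unfolding S_G_def by (rule CollectI, rule exI[of _ "\<lambda>_. 0"]) simp

lemma S_G_mult_princ_det:
  assumes s: "s \<in> S_G p E" and j: "j \<in> {1..p}"
  shows "s * princ_det (pa E j) ^ d \<in> S_G p E"
proof -
  obtain k where k: "s = (\<Prod>i\<in>{1..p}. princ_det (pa E i) ^ k i)" using s by (auto simp: S_G_def)
  have "(\<Prod>i\<in>{1..p}. princ_det (pa E i) ^ (if i = j then d else 0)) = princ_det (pa E j) ^ d"
    using j by (simp add: if_distrib[of "\<lambda>e. _ ^ e"] prod.If_cases Int_absorb1)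
  then have eq: "s * princ_det (pa E j) ^ d =
      (\<Prod>i\<in>{1..p}. princ_det (pa E i) ^ (k i + (if i = j then d else 0)))"
    unfolding k by (simp add: power_add prod.distrib)
  show ?thesis
    unfolding S_G_def by (rule CollectI, rule exI[of _ "\<lambda>i. k i + (if i = j then d else 0)"]) (simp add: eq)
qed

lemma elimination_step:
  assumes ij: "(i, j) \<in> dep_vars" and f: "f \<in> polys_in (insert (i, j) (elim_vars (rank (i, j))))"
  obtains d Q r where "princ_det (pa E j) ^ d * f = Q * cond_det i j (pa E j) + r"
    and "Q \<in> RSigma p" and "r \<in> polys_in (elim_vars (rank (i, j)))"
proof -
  obtain h where h: "h \<in> polys_in (elim_vars (rank (i, j)))"
    and g: "cond_det i j (pa E j) = princ_det (pa E j) * var (i, j) - h"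
    by (rule cond_det_decomp[OF ij])
  have c: "princ_det (pa E j) \<in> polys_in (elim_vars (rank (i, j)))"
    using ij by (intro princ_det_in_elim_vars) (simp_all add: dep_vars_def rank_def)
  obtain d Q r where div: "princ_det (pa E j) ^ d * f = Q * (princ_det (pa E j) * var (i, j) - h) + r"
    and Q: "Q \<in> polys_in (insert (i, j) (elim_vars (rank (i, j))))"
    and r: "r \<in> polys_in (elim_vars (rank (i, j)))"
    by (rule pseudo_divide_linear[OF f c h])
  have "insert (i, j) (elim_vars (rank (i, j))) \<subseteq> free_vars \<union> dep_vars"
    using ij elim_vars_subset by blast
  with Q have "Q \<in> RSigma p" unfolding RSigma_eq by (rule polys_in_mono[rotated])
  from div[folded g] this r show thesis by (rule that)
qed

lemma elimination_insert:
  assumes ij: "(i, j) \<in> dep_vars"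
    and IH: "\<And>r. r \<in> polys_in (elim_vars (rank (i, j))) \<Longrightarrow> \<forall>\<theta>. insertion (param \<theta>) r = 0 \<Longrightarrow>
      \<exists>s\<in>S_G p E. r * s \<in> I_G p E"
    and f: "f \<in> polys_in (insert (i, j) (elim_vars (rank (i, j))))"
    and vanish: "\<forall>\<theta>. insertion (param \<theta>) f = 0"
  shows "\<exists>s\<in>S_G p E. f * s \<in> I_G p E"
proof -
  let ?c = "princ_det (pa E j)" and ?g = "cond_det i j (pa E j)"
  obtain d Q r where div: "?c ^ d * f = Q * ?g + r"
    and Q: "Q \<in> RSigma p" and r: "r \<in> polys_in (elim_vars (rank (i, j)))"
    by (rule elimination_step[OF ij f]) blast
  have "insertion (param \<theta>) r = 0" for \<theta>
  proof -
    have "r = ?c ^ d * f - Q * ?g" using div by simp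
    then show ?thesis
      using vanish insertion_param_cond_det[of i j \<theta>] ij
      by (simp add: insertion_hom.hom_minus insertion_mult dep_vars_def)
  qed
  then obtain s where s: "s \<in> S_G p E" "r * s \<in> I_G p E" using IH[OF r] by blast
  have "f * (s * ?c ^ d) = s * (?c ^ d * f)" by (simp add: mult_ac)
  also have "\<dots> = (s * Q) * ?g + r * s" unfolding div by (simp add: algebra_simps)
  finally have "f * (s * ?c ^ d) = (s * Q) * ?g + r * s" .
  moreover have "s * Q \<in> RSigma p"
    using S_G_subset_RSigma s(1) Q unfolding RSigma_eq by (blast intro: polys_in_mult)
  ultimately have "f * (s * ?c ^ d) \<in> I_G p E"
    using is_ideal_I_G cond_det_in_I_G[OF ij] s(2) by (simp add: is_ideal_def)
  moreover have "s * ?c ^ d \<in> S_G p E"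
    using S_G_mult_princ_det s(1) ij by (simp add: dep_vars_def)
  ultimately show ?thesis by blast
qed

lemma elimination:
  "f \<in> polys_in (elim_vars n) \<Longrightarrow> \<forall>\<theta>. insertion (param \<theta>) f = 0 \<Longrightarrow> \<exists>s\<in>S_G p E. f * s \<in> I_G p E"
proof (induction n arbitrary: f)
  case 0
  then have "f = 0" using free_vars_independent by (simp add: elim_vars_def)
  then show ?case using one_in_S_G is_ideal_I_G by (auto simp: is_ideal_def)
next
  case (Suc n)
  show ?case
  proof (cases "\<exists>d\<in>dep_vars. rank d = n")
    case False
    then have "f \<in> polys_in (elim_vars n)" using Suc.prems(1) by (simp add: elim_vars_Suc_same)
    then show ?thesis using Suc.IH Suc.prems(2) by blast
  next
    case True
    then obtain i j where ij: "(i, j) \<in> dep_vars" and n: "rank (i, j) = n" by auto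
    have "f \<in> polys_in (insert (i, j) (elim_vars (rank (i, j))))"
      using Suc.prems(1) by (simp add: elim_vars_Suc[OF ij n] n)
    then show ?thesis
      using elimination_insert[OF ij] Suc.IH Suc.prems(2) unfolding n by blast
  qed
qed

lemma saturation_eq_param_ideal: "saturation (RSigma p) (I_G p E) (S_G p E) = param_ideal"
proof
  have "\<exists>\<theta>. insertion (param \<theta>) s \<noteq> 0" if "s \<in> S_G p E" for s
    using insertion_param_theta_id_S_G[OF that] by (intro exI[of _ theta_id]) simp
  then show "saturation (RSigma p) (I_G p E) (S_G p E) \<subseteq> param_ideal"
    unfolding param_ideal_def
    by (intro saturation_subset_vanishing_ideal poly_fun_param)
      (use I_G_subset_param_ideal in \<open>simp_all add: param_ideal_def\<close>)
  show "param_ideal \<subseteq> saturation (RSigma p) (I_G p E) (S_G p E)"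
  proof
    fix f assume f: "f \<in> param_ideal"
    then have "f \<in> polys_in (free_vars \<union> dep_vars)"
      by (simp add: param_ideal_def vanishing_ideal_def RSigma_eq)
    then have "f \<in> polys_in (elim_vars (Suc ((p + 1) * (p + 1))))"
      by (rule polys_in_mono[OF all_vars_subset_elim_vars])
    then have "\<exists>s\<in>S_G p E. f * s \<in> I_G p E"
      using f elimination by (simp add: param_ideal_def vanishing_ideal_def)
    with f show "f \<in> saturation (RSigma p) (I_G p E) (S_G p E)"
      by (simp add: saturation_def param_ideal_def vanishing_ideal_def)
  qed
qed

end

theorem mainTheorem10:
  fixes p :: nat and E :: "(nat \<times> nat) set"
  assumes "nat_ordered_dag p E"
  shows "is_prime_ideal (RSigma p) (saturation (RSigma p) (I_G p E) (S_G p E))"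
proof -
  interpret ordered_dag p E by (rule ordered_dag.intro) (rule assms)
  show ?thesis using is_prime_param_ideal by (simp add: saturation_eq_param_ideal)
qed

end
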